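(* Let $(\mathbf{c}^*,\mathbf{y}^*,\mathbf{E}^*,\mathbf{z}^* )$ be an optimal solution to $\mathbf{IO}$ with objective value $\mathscr{D}^*$, and let $\mathscr{D}_{opt}$, $j_{opt}$ and $\mathbf{z}_{opt}$ be the results of the algorithm described in the context. Then $\mathscr{D}^*=\mathscr{D}_{opt}$.
   Context: Forward problem $\mathbf{FO}(\mathbf{c})$: maximize $\mathbf{c}'\mathbf{x}$ subject to $\mathbf{A}\mathbf{x}\ge\mathbf{b}$ (relevant constraints, rows $\mathbf{a}_j$, $j\in\{1,\dots,m_1\}$), $\mathbf{W}\mathbf{x}\ge\mathbf{q}$ (trivial constraints); feasible region nonempty, full-dimensional, no redundant constraints. Given observations $\mathbf{x}^k$, $k\in\mathcal{K}=\{1,\dots,K\}$, the multi-observation inverse optimization model $\mathbf{IO}$ is: minimize a distance measure $\mathscr{D}(\mathbf{E},\mathbf{A})\ge0$ over $\mathbf{c},\mathbf{y},\mathbf{E},\mathbf{z}$ subject to $\mathbf{A}\mathbf{z}\ge\mathbf{b}$, $\mathbf{W}\mathbf{z}\ge\mathbf{q}$, $\mathbf{c}'\mathbf{z}=\mathbf{b}'\mathbf{y}$, $\mathbf{z}=\mathbf{x}^k-\epsilon^k$ for all $k$, $\mathbf{A}'\mathbf{y}=\mathbf{c}$, $\|\mathbf{c}\|_L=1$, $\mathbf{y}\ge\mathbf{0}$ ($\mathbf{E}$ has columns $\epsilon^k$). For each $j\in\{1,\dots,m_1\}$ define $\mathbf{BIL}_j$: minimize $\mathscr{D}(\mathbf{E},\mathbf{A})$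 subject to $\mathbf{a}_j\mathbf{z}_j=b_j$, $\mathbf{A}\mathbf{z}_j\ge\mathbf{b}$, $\mathbf{W}\mathbf{z}_j\ge\mathbf{q}$, $\mathbf{z}_j=\mathbf{x}^k-\epsilon^k_j$ for all $k$. The algorithm solves $\mathbf{BIL}_j$ for every $j$ and returns $\mathscr{D}_{opt}$ = the smallest of the optimal values $\mathscr{D}^j_{opt}$, $j_{opt}$ = an index attaining it, and $\mathbf{z}_{opt}$ = the corresponding optimal point. *)

theory Defs
  imports "HOL-Analysis.Analysis"
begin

definition vge :: "real^'m \<Rightarrow> real^'m \<Rightarrow> bool" where
  "vge u v \<longleftrightarrow> (\<forall>i. u $ i \<ge> v $ i)"

definition FO_region :: "real^'n^'m \<Rightarrow> real^'m \<Rightarrow> real^'n^'p \<Rightarrow> real^'p \<Rightarrow> (real^'n) set" where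
  "FO_region A b W q = {x. vge (A *v x) b \<and> vge (W *v x) q}"

definition no_redundant_constraints ::
  "real^'n^'m \<Rightarrow> real^'m \<Rightarrow> real^'n^'p \<Rightarrow> real^'p \<Rightarrow> bool" where
  "no_redundant_constraints A b W q \<longleftrightarrow>
     (\<forall>j. {x. (\<forall>i. i \<noteq> j \<longrightarrow> (A *v x) $ i \<ge> b $ i) \<and> vge (W *v x) q} \<noteq> FO_region A b W q) \<and>
     (\<forall>l. {x. vge (A *v x) b \<and> (\<forall>i. i \<noteq> l \<longrightarrow> (W *v x) $ i \<ge> q $ i)} \<noteq> FO_region A b W q)"

definition is_norm_fun :: "(real^'n \<Rightarrow> real) \<Rightarrow> bool" where
  "is_norm_fun N \<longleftrightarrow> (\<forall>x. N x \<ge> 0) \<and> (\<forall>x. N x = 0 \<longleftrightarrow> x = 0) \<and>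
     (\<forall>a x. N (a *\<^sub>R x) = \<bar>a\<bar> * N x) \<and> (\<forall>x y. N (x + y) \<le> N x + N y)"

text \<open>Feasibility for the inverse problem IO. Observations X k, k ranging over the
  finite type 'k; E has columns \<epsilon>^k = column k E.\<close>
definition IO_feasible ::
  "real^'n^'m \<Rightarrow> real^'m \<Rightarrow> real^'n^'p \<Rightarrow> real^'p \<Rightarrow> (real^'n \<Rightarrow> real) \<Rightarrow> ('k \<Rightarrow> real^'n)
   \<Rightarrow> real^'n \<Rightarrow> real^'m \<Rightarrow> real^'k^'n \<Rightarrow> real^'n \<Rightarrow> bool" where
  "IO_feasible A b W q N X c y E z \<longleftrightarrow>
     vge (A *v z) b \<and> vge (W *v z) q \<and> c \<bullet> z = b \<bullet> y \<and>
     (\<forall>k. z = X k - column k E) \<and> transpose A *v y = c \<and> N c = 1 \<and> vge y 0"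

definition IO_optimal ::
  "(real^'k^'n \<Rightarrow> real^'n^'m \<Rightarrow> real) \<Rightarrow>
   real^'n^'m \<Rightarrow> real^'m \<Rightarrow> real^'n^'p \<Rightarrow> real^'p \<Rightarrow> (real^'n \<Rightarrow> real) \<Rightarrow> ('k \<Rightarrow> real^'n)
   \<Rightarrow> real^'n \<Rightarrow> real^'m \<Rightarrow> real^'k^'n \<Rightarrow> real^'n \<Rightarrow> bool" where
  "IO_optimal D A b W q N X c y E z \<longleftrightarrow>
     IO_feasible A b W q N X c y E z \<and>
     (\<forall>c' y' E' z'. IO_feasible A b W q N X c' y' E' z' \<longrightarrow> D E A \<le> D E' A)"

definition BIL_feasible ::
  "real^'n^'m \<Rightarrow> real^'m \<Rightarrow> real^'n^'p \<Rightarrow> real^'p \<Rightarrow> ('k \<Rightarrow> real^'n) \<Rightarrow> 'm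
   \<Rightarrow> real^'k^'n \<Rightarrow> real^'n \<Rightarrow> bool" where
  "BIL_feasible A b W q X j E z \<longleftrightarrow>
     (A $ j) \<bullet> z = b $ j \<and> vge (A *v z) b \<and> vge (W *v z) q \<and> (\<forall>k. z = X k - column k E)"

definition BIL_value ::
  "(real^'k^'n \<Rightarrow> real^'n^'m \<Rightarrow> real) \<Rightarrow>
   real^'n^'m \<Rightarrow> real^'m \<Rightarrow> real^'n^'p \<Rightarrow> real^'p \<Rightarrow> ('k \<Rightarrow> real^'n) \<Rightarrow> 'm \<Rightarrow> real" where
  "BIL_value D A b W q X j = Inf {D E A | E z. BIL_feasible A b W q X j E z}"

definition D_opt ::
  "(real^'k^'n \<Rightarrow> real^'n^'m \<Rightarrow> real) \<Rightarrow>
   real^'n^'m \<Rightarrow> real^'m \<Rightarrow> real^'n^'p \<Rightarrow> real^'p \<Rightarrow> ('k \<Rightarrow> real^'n) \<Rightarrow> real" where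
  "D_opt D A b W q X = (MIN j. BIL_value D A b W q X j)"

end

theory Submission
  imports Defs
begin

text \<open>A pair (E, z) is feasible for IO exactly when it is feasible for some BIL_j.
  If z is optimal for FO(c) with dual certificate y, then y \<noteq> 0 because c \<noteq> 0, and
  complementary slackness puts z on the face a_j z = b_j of any row with y_j > 0.
  Conversely every point of that face is optimal for c = a_j / \<parallel>a_j\<parallel>.
  So the optimal value of IO is the least of the optimal values of the BIL_j. Without
  redundant constraints every row is nonzero and every face is nonempty, so each of these
  optimal values is an infimum over a nonempty set.\<close>

definition FO_region_without_row ::
  "real^'n^'m \<Rightarrow> real^'m \<Rightarrow> real^'n^'p \<Rightarrow> real^'p \<Rightarrow> 'm \<Rightarrow> (real^'n) set" where
  "FO_region_without_row A b W q j =
     {x. (\<forall>i. i \<noteq> j \<longrightarrow> b $ i \<le> A $ i \<bullet> x) \<and> (\<forall>i. q $ i \<le> W $ i \<bullet> x)}"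

lemma FO_region_iff_without_row:
  "x \<in> FO_region A b W q \<longleftrightarrow> x \<in> FO_region_without_row A b W q j \<and> b $ j \<le> A $ j \<bullet> x"
  by (auto simp: FO_region_def FO_region_without_row_def vge_def matrix_vector_mul_component)

lemma convex_FO_region_without_row: "convex (FO_region_without_row A b W q j)"
proof -
  have "FO_region_without_row A b W q j =
        (\<Inter>i\<in>-{j}. {x. b $ i \<le> A $ i \<bullet> x}) \<inter> (\<Inter>i. {x. q $ i \<le> W $ i \<bullet> x})"
    by (auto simp: FO_region_without_row_def)
  then show ?thesis
    by (simp add: convex_Int convex_INT convex_halfspace_ge)
qed

lemma nonredundant_row_violated:
  assumes "no_redundant_constraints A b W q"
  obtains x where "x \<in> FO_region_without_row A b W q j" and "A $ j \<bullet> x < b $ j"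
proof -
  have "FO_region_without_row A b W q j \<noteq> FO_region A b W q"
    using assms unfolding no_redundant_constraints_def FO_region_without_row_def
    by (simp add: vge_def matrix_vector_mul_component)
  moreover have "FO_region A b W q \<subseteq> FO_region_without_row A b W q j"
    using FO_region_iff_without_row by blast
  ultimately obtain x where "x \<in> FO_region_without_row A b W q j" "x \<notin> FO_region A b W q"
    by blast
  then show ?thesis
    using FO_region_iff_without_row[of x A b W q j] by (auto intro: that)
qed

lemma nonredundant_row_nonzero:
  assumes "FO_region A b W q \<noteq> {}" and "no_redundant_constraints A b W q"
  shows "A $ j \<noteq> 0"
proof -
  obtain x0 where "x0 \<in> FO_region A b W q" using assms(1) by blast
  then have "b $ j \<le> A $ j \<bullet> x0" using FO_region_iff_without_row by blast
  moreover obtain x where "A $ j \<bullet> x < b $ j"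
    using nonredundant_row_violated[OF assms(2)] by blast
  ultimately show ?thesis by auto
qed

text \<open>A feasible point and a point violating only row j both lie in the convex, hence
  connected, region of the other constraints; by the intermediate value theorem that
  region meets the hyperplane of row j.\<close>
lemma nonredundant_face_nonempty:
  assumes "FO_region A b W q \<noteq> {}" and "no_redundant_constraints A b W q"
  obtains z where "z \<in> FO_region A b W q" and "A $ j \<bullet> z = b $ j"
proof -
  let ?R = "FO_region_without_row A b W q j"
  obtain x0 where "x0 \<in> FO_region A b W q" using assms(1) by blast
  then have "x0 \<in> ?R" and "b $ j \<le> A $ j \<bullet> x0" using FO_region_iff_without_row by blast+
  moreover obtain x where "x \<in> ?R" and "A $ j \<bullet> x < b $ j"
    using nonredundant_row_violated[OF assms(2)] by blast
  moreover have "connected ?R"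
    by (rule convex_connected[OF convex_FO_region_without_row])
  ultimately obtain z where "z \<in> ?R" and "A $ j \<bullet> z = b $ j"
    using connected_ivt_hyperplane[of ?R x x0 "A $ j" "b $ j"] by auto
  then show ?thesis
    by (intro that) (simp_all add: FO_region_iff_without_row[of z A b W q j])
qed

lemma BIL_feasible_exists:
  assumes "FO_region A b W q \<noteq> {}" and "no_redundant_constraints A b W q"
  shows "\<exists>E z. BIL_feasible A b W q X j E z"
proof -
  obtain z where "z \<in> FO_region A b W q" and "A $ j \<bullet> z = b $ j"
    using nonredundant_face_nonempty[OF assms] .
  then have "BIL_feasible A b W q X j (\<chi> i k. (X k - z) $ i) z"
    by (simp add: BIL_feasible_def FO_region_def column_def vec_eq_iff)
  then show ?thesis by blast
qed

lemma BIL_feasible_imp_IO_feasible: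
  assumes "A $ j \<noteq> 0" and norm: "is_norm_fun N"
    and BIL: "BIL_feasible A b W q X j E z"
  shows "\<exists>c y. IO_feasible A b W q N X c y E z"
proof -
  define n where "n = N (A $ j)"
  have n: "n > 0"
    using norm assms(1) unfolding is_norm_fun_def n_def by (metis less_eq_real_def)
  define c where "c = (1 / n) *\<^sub>R A $ j"
  define y where "y = (\<chi> i. if i = j then 1 / n else 0)"
  have "N c = \<bar>1 / n\<bar> * n"
    using norm by (simp add: is_norm_fun_def c_def n_def)
  then have "N c = 1" using n by simp
  moreover have "c \<bullet> z = b \<bullet> y"
    using BIL by (simp add: c_def y_def BIL_feasible_def inner_vec_def if_distrib
        sum_divide_distrib[symmetric] cong: if_cong)
  moreover have "transpose A *v y = c"
    by (simp add: vec_eq_iff matrix_vector_mult_def transpose_def y_def c_def if_distrib cong: if_cong)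
  moreover have "vge y 0" using n by (simp add: vge_def y_def)
  ultimately show ?thesis
    using BIL unfolding IO_feasible_def BIL_feasible_def by blast
qed

lemma complementary_slackness:
  fixes y u v :: "real^'m"
  assumes "vge y 0" and "vge u v" and "y \<bullet> u = y \<bullet> v" and "y $ j > 0"
  shows "u $ j = v $ j"
proof -
  have "(\<Sum>i\<in>UNIV. y $ i * (u $ i - v $ i)) = 0"
    using assms(3) by (simp add: inner_vec_def algebra_simps sum_subtractf)
  moreover have "\<And>i. 0 \<le> y $ i * (u $ i - v $ i)"
    using assms(1,2) by (simp add: vge_def)
  ultimately have "y $ j * (u $ j - v $ j) = 0"
    by (simp add: sum_nonneg_eq_0_iff)
  then show ?thesis using assms(4) by simp
qed

lemma IO_feasible_imp_BIL_feasible: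
  assumes IO: "IO_feasible A b W q N X c y E z" and norm: "is_norm_fun N"
  obtains j where "BIL_feasible A b W q X j E z"
proof -
  have "c \<noteq> 0"
    using IO norm unfolding IO_feasible_def is_norm_fun_def by (metis zero_neq_one)
  then have "y \<noteq> 0"
    using IO by (auto simp: IO_feasible_def)
  moreover have "vge y 0" using IO by (simp add: IO_feasible_def)
  ultimately obtain j where j: "y $ j > 0"
    by (metis less_eq_real_def vec_eq_iff vge_def zero_index)
  have "y \<bullet> (A *v z) = c \<bullet> z"
    using IO unfolding IO_feasible_def by (metis dot_lmul_matrix transpose_matrix_vector)
  then have "y \<bullet> (A *v z) = y \<bullet> b"
    using IO by (simp add: IO_feasible_def inner_commute)
  then have "(A *v z) $ j = b $ j"
    using complementary_slackness[OF _ _ _ j] IO by (simp add: IO_feasible_def)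
  then show ?thesis
    using IO by (intro that[of j]) (simp add: BIL_feasible_def IO_feasible_def matrix_vector_mul_component)
qed

lemma BIL_value_le:
  assumes "\<And>E. D E A \<ge> 0" and "BIL_feasible A b W q X j E z"
  shows "BIL_value D A b W q X j \<le> D E A"
  unfolding BIL_value_def
  using assms by (intro cInf_lower bdd_belowI[of _ 0]) auto

lemma le_BIL_value:
  assumes "\<exists>E z. BIL_feasible A b W q X j E z"
    and "\<And>E z. BIL_feasible A b W q X j E z \<Longrightarrow> d \<le> D E A"
  shows "d \<le> BIL_value D A b W q X j"
  unfolding BIL_value_def
  using assms by (intro cInf_greatest) auto

theorem theorem1:
  fixes A :: "real^'n^'m" and b :: "real^'m"
    and W :: "real^'n^'p" and q :: "real^'p"
    and N :: "real^'n \<Rightarrow> real"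
    and X :: "'k::finite \<Rightarrow> real^'n"
    and D :: "real^'k^'n \<Rightarrow> real^'n^'m \<Rightarrow> real"
    and cs :: "real^'n" and ys :: "real^'m" and Es :: "real^'k^'n" and zs :: "real^'n"
  assumes nonempty: "FO_region A b W q \<noteq> {}"
    and fulldim: "interior (FO_region A b W q) \<noteq> {}"
    and nonred: "no_redundant_constraints A b W q"
    and norm: "is_norm_fun N"
    and Dnonneg: "\<And>E. D E A \<ge> 0"
    and opt: "IO_optimal D A b W q N X cs ys Es zs"
  shows "D Es A = D_opt D A b W q X"
proof -
  have lower: "D Es A \<le> BIL_value D A b W q X j" for j
  proof (rule le_BIL_value[OF BIL_feasible_exists[OF nonempty nonred]])
    fix E z assume "BIL_feasible A b W q X j E z"
    then obtain c y where "IO_feasible A b W q N X c y E z"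
      using BIL_feasible_imp_IO_feasible[OF nonredundant_row_nonzero[OF nonempty nonred] norm]
      by blast
    then show "D Es A \<le> D E A" using opt unfolding IO_optimal_def by blast
  qed
  obtain j0 where "BIL_feasible A b W q X j0 Es zs"
    using IO_feasible_imp_BIL_feasible opt norm by (metis IO_optimal_def)
  then have "BIL_value D A b W q X j0 \<le> D Es A"
    using BIL_value_le Dnonneg by blast
  then have "D Es A = BIL_value D A b W q X j0"
    using lower by (simp add: antisym)
  then show ?thesis
    unfolding D_opt_def using lower by (intro antisym Min_le Min.boundedI) auto
qed

end
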